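(* Let $V$ be a module of the intermediate series over $\mathcal{L}[\frac12]$ on which $c$ acts as $0$ and on which $\mathcal{S}=\mathrm{span}\{Y_p,M_n\}$ acts nontrivially, and suppose $V$ has a basis $\{x_k\mid k\in\frac12\mathbb{Z}\}$ and there are $a,b,b'\in\mathbb{C}$ and $f_{p,k},g_{n,k}\in\mathbb{C}$ such that, for all $p\in\frac12+\mathbb{Z}$, $n\in\mathbb{Z}$, $k\in\frac12\mathbb{Z}$: $Y_px_k=f_{p,k}x_{k+p}$, $M_nx_k=g_{n,k}x_{k+n}$, $L_nx_k=(a+k+bn)x_{k+n}$ if $k\in\mathbb{Z}$ and $L_nx_k=(a+k+b'n)x_{k+n}$ if $k\in\frac12+\mathbb{Z}$. Then $b'=b+\frac12$, or $b'=b-\frac12$, or $(b,b')\in\{(0,\frac32),(\frac32,0),(1,-\frac12),(-\frac12,1)\}$.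
   Context: $\mathcal{L}[\frac12]$ is the complex Lie algebra with basis $\{L_m,Y_p,M_n,c\mid m,n\in\mathbb{Z},\ p\in\frac12+\mathbb{Z}\}$ and brackets $[L_m,L_{m'}]=(m'-m)L_{m+m'}+\delta_{m,-m'}\frac{m^3-m}{12}c$, $[L_m,Y_p]=(p-\frac m2)Y_{p+m}$, $[L_m,M_n]=nM_{n+m}$, $[Y_p,Y_{p'}]=(p'-p)M_{p+p'}$, $[Y_p,M_n]=[M_n,M_{n'}]=0$, $c$ central. With $\mathcal{H}=\mathrm{span}\{L_0,M_0,c\}$, a module of the intermediate series is an indecomposable module $V=\bigoplus_{\lambda\in\mathcal{H}^*}V^\lambda$, $V^\lambda=\{v\mid xv=\lambda(x)v\ \forall x\in\mathcal{H}\}$, with $\dim V^\lambda\le1$ for all $\lambda$. *)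

theory Defs
  imports Complex_Main
begin

text \<open>Half-integers k in (1/2)Z are encoded by the doubled integer j = 2k.
  The module V with basis x_k (k in (1/2)Z) is realised as the space of finitely supported
  functions v :: int => complex, v j being the coordinate of v at x_(j/2).
  Y_p (p in 1/2 + Z) is indexed by the odd integer q = 2p; L_n, M_n by n :: int.
  Coefficients: f q j = f_(q/2, j/2) and g n j = g_(n, j/2).\<close>

type_synonym vec = "int \<Rightarrow> complex"

definition Vsp :: "vec set" where
  "Vsp = {v. finite {j. v j \<noteq> 0}}"

definition vzero :: vec where "vzero = (\<lambda>j. 0)"
definition vadd :: "vec \<Rightarrow> vec \<Rightarrow> vec" where "vadd u v = (\<lambda>j. u j + v j)"
definition vsub :: "vec \<Rightarrow> vec \<Rightarrow> vec" where "vsub u v = (\<lambda>j. u j - v j)"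
definition smul :: "complex \<Rightarrow> vec \<Rightarrow> vec" where "smul c v = (\<lambda>j. c * v j)"

definition Lop :: "complex \<Rightarrow> complex \<Rightarrow> complex \<Rightarrow> int \<Rightarrow> vec \<Rightarrow> vec" where
  "Lop a b b' n v = (\<lambda>j. (a + of_int (j - 2*n) / 2 + (if even (j - 2*n) then b else b') * of_int n)
                          * v (j - 2*n))"

definition Yop :: "(int \<Rightarrow> int \<Rightarrow> complex) \<Rightarrow> int \<Rightarrow> vec \<Rightarrow> vec" where
  "Yop f q v = (\<lambda>j. f q (j - q) * v (j - q))"

definition Mop :: "(int \<Rightarrow> int \<Rightarrow> complex) \<Rightarrow> int \<Rightarrow> vec \<Rightarrow> vec" where
  "Mop g n v = (\<lambda>j. g n (j - 2*n) * v (j - 2*n))"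

definition comm :: "(vec \<Rightarrow> vec) \<Rightarrow> (vec \<Rightarrow> vec) \<Rightarrow> vec \<Rightarrow> vec" where
  "comm A B v = vsub (A (B v)) (B (A v))"

definition is_rep :: "(int \<Rightarrow> vec \<Rightarrow> vec) \<Rightarrow> (int \<Rightarrow> vec \<Rightarrow> vec) \<Rightarrow> (int \<Rightarrow> vec \<Rightarrow> vec)
                      \<Rightarrow> (vec \<Rightarrow> vec) \<Rightarrow> bool" where
  "is_rep L Y M C \<longleftrightarrow>
    (\<forall>v\<in>Vsp.
      (\<forall>m m'. comm (L m) (L m') v =
          vadd (smul (of_int (m' - m)) (L (m + m') v))
               (smul (if m = - m' then of_int (m^3 - m) / 12 else 0) (C v))) \<and>
      (\<forall>m q. odd q \<longrightarrow> comm (L m) (Y q) v = smul (of_int q / 2 - of_int m / 2) (Y (q + 2*m) v)) \<and>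
      (\<forall>m n. comm (L m) (M n) v = smul (of_int n) (M (n + m) v)) \<and>
      (\<forall>q q'. odd q \<longrightarrow> odd q' \<longrightarrow>
          comm (Y q) (Y q') v = smul ((of_int q' - of_int q) / 2) (M ((q + q') div 2) v)) \<and>
      (\<forall>q n. odd q \<longrightarrow> comm (Y q) (M n) v = vzero) \<and>
      (\<forall>n n'. comm (M n) (M n') v = vzero) \<and>
      (\<forall>m. comm C (L m) v = vzero) \<and>
      (\<forall>q. odd q \<longrightarrow> comm C (Y q) v = vzero) \<and>
      (\<forall>n. comm C (M n) v = vzero))"

definition is_submodule :: "(int \<Rightarrow> vec \<Rightarrow> vec) \<Rightarrow> (int \<Rightarrow> vec \<Rightarrow> vec) \<Rightarrow> (int \<Rightarrow> vec \<Rightarrow> vec)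
                      \<Rightarrow> (vec \<Rightarrow> vec) \<Rightarrow> vec set \<Rightarrow> bool" where
  "is_submodule L Y M C U \<longleftrightarrow> U \<subseteq> Vsp \<and> vzero \<in> U \<and>
     (\<forall>u\<in>U. \<forall>w\<in>U. vadd u w \<in> U) \<and> (\<forall>c. \<forall>u\<in>U. smul c u \<in> U) \<and>
     (\<forall>u\<in>U. (\<forall>m. L m u \<in> U) \<and> (\<forall>q. odd q \<longrightarrow> Y q u \<in> U) \<and> (\<forall>n. M n u \<in> U) \<and> C u \<in> U)"

definition indecomposable :: "(int \<Rightarrow> vec \<Rightarrow> vec) \<Rightarrow> (int \<Rightarrow> vec \<Rightarrow> vec) \<Rightarrow> (int \<Rightarrow> vec \<Rightarrow> vec)
                      \<Rightarrow> (vec \<Rightarrow> vec) \<Rightarrow> bool" where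
  "indecomposable L Y M C \<longleftrightarrow> Vsp \<noteq> {vzero} \<and>
     (\<forall>U W. is_submodule L Y M C U \<and> is_submodule L Y M C W \<and> U \<inter> W = {vzero} \<and>
            {vadd u w | u w. u \<in> U \<and> w \<in> W} = Vsp \<longrightarrow> U = {vzero} \<or> W = {vzero})"

definition weight_space :: "(int \<Rightarrow> vec \<Rightarrow> vec) \<Rightarrow> (int \<Rightarrow> vec \<Rightarrow> vec) \<Rightarrow> (vec \<Rightarrow> vec)
                     \<Rightarrow> complex \<Rightarrow> complex \<Rightarrow> complex \<Rightarrow> vec set" where
  "weight_space L M C l1 l2 l3 =
     {v \<in> Vsp. L 0 v = smul l1 v \<and> M 0 v = smul l2 v \<and> C v = smul l3 v}"

definition intermediate_series :: "(int \<Rightarrow> vec \<Rightarrow> vec) \<Rightarrow> (int \<Rightarrow> vec \<Rightarrow> vec) \<Rightarrow> (int \<Rightarrow> vec \<Rightarrow> vec)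
                      \<Rightarrow> (vec \<Rightarrow> vec) \<Rightarrow> bool" where
  "intermediate_series L Y M C \<longleftrightarrow>
     is_rep L Y M C \<and> indecomposable L Y M C \<and>
     (\<forall>v\<in>Vsp. \<exists>vs. (\<forall>w\<in>set vs. \<exists>l1 l2 l3. w \<in> weight_space L M C l1 l2 l3) \<and>
                    v = foldr vadd vs vzero) \<and>
     (\<forall>l1 l2 l3. \<forall>u\<in>weight_space L M C l1 l2 l3. \<forall>w\<in>weight_space L M C l1 l2 l3.
         \<exists>\<alpha> \<beta>. (\<alpha> \<noteq> 0 \<or> \<beta> \<noteq> 0) \<and> vadd (smul \<alpha> u) (smul \<beta> w) = vzero)"

end

theory Submission
  imports Defs
begin

text \<open>
  Testing the relation [L_m, Y_p] = (p - m/2) Y_(p+m) on a basis vector x_k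
  gives a linear recursion for the coefficients f_(p,k). Restricted to one parity class
  of k (integers, or 1/2 + integers) it only involves the parameter of L on the source
  class and on the target class; we capture it by the predicate L_Y_recursion.
  The core of the file is a purely algebraic statement about this recursion: if some
  coefficient is nonzero, the two parameters satisfy the conclusion. There one shows
  that the coefficients of Y_(1/2) do not all vanish, eliminates the other coefficients
  from a window of relations around a nonzero one to get a quartic constraint, and
  rules out the spurious roots on the two "anti-diagonal" factors by a second, longer
  window. Finally, S acting nontrivially forces some f_(p,k) to be nonzero (otherwise
  Y = 0 and then M = [Y,Y] = 0), and the recursion for its parity class gives the claim.
\<close>

section \<open>The recursion for the coefficients of Y\<close>

text \<open>phi q t is the coefficient of Y_(q/2) on the t-th basis vector of one parity class,
  c + t is the L_0-eigenvalue of that vector, alpha (resp. beta) is the parameter of L on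
  the source (resp. target) parity class.\<close>
definition L_Y_recursion :: "complex \<Rightarrow> complex \<Rightarrow> complex \<Rightarrow> (int \<Rightarrow> int \<Rightarrow> complex) \<Rightarrow> bool" where
  "L_Y_recursion \<alpha> \<beta> c \<phi> \<longleftrightarrow>
     (\<forall>q m t. odd q \<longrightarrow>
        (c + of_int t + of_int q/2 + \<beta>*of_int m) * \<phi> q t - (c + of_int t + \<alpha>*of_int m) * \<phi> q (t+m)
        = (of_int q/2 - of_int m/2) * \<phi> (q+2*m) t)"

lemma L_Y_recursion_instances:
  assumes R: "L_Y_recursion \<alpha> \<beta> c \<phi>"
  shows step_up: "(c + of_int t + 1/2 + \<beta>)*\<phi> 1 t - (c + of_int t + \<alpha>)*\<phi> 1 (t+1) = 0"
    and step_down: "(c + of_int t + 1/2 - \<beta>)*\<phi> 1 t - (c + of_int t - \<alpha>)*\<phi> 1 (t-1) = \<phi> (-1) t"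
    and step_down_neg: "(c + of_int t - 1/2 - \<beta>)*\<phi> (-1) t - (c + of_int t - \<alpha>)*\<phi> (-1) (t-1) = 0"
    and step_two_neg: "(c + of_int t - 1/2 + 2*\<beta>)*\<phi> (-1) t - (c + of_int t + 2*\<alpha>)*\<phi> (-1) (t+2)
                         = -3/2 * \<phi> 3 t"
    and step_two: "(c + of_int t + 1/2 + 2*\<beta>)*\<phi> 1 t - (c + of_int t + 2*\<alpha>)*\<phi> 1 (t+2) = -1/2 * \<phi> 5 t"
    and step_up_three: "(c + of_int t + 3/2 + \<beta>)*\<phi> 3 t - (c + of_int t + \<alpha>)*\<phi> 3 (t+1) = \<phi> 5 t"
proof -
  have E: "odd q \<Longrightarrow> (c + of_int t + of_int q/2 + \<beta>*of_int m) * \<phi> q t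
      - (c + of_int t + \<alpha>*of_int m) * \<phi> q (t+m) = (of_int q/2 - of_int m/2) * \<phi> (q+2*m) t" for q m t
    using R unfolding L_Y_recursion_def by blast
  show "(c + of_int t + 1/2 + \<beta>)*\<phi> 1 t - (c + of_int t + \<alpha>)*\<phi> 1 (t+1) = 0"
    using E[of 1 t 1] by simp
  show "(c + of_int t + 1/2 - \<beta>)*\<phi> 1 t - (c + of_int t - \<alpha>)*\<phi> 1 (t-1) = \<phi> (-1) t"
    using E[of 1 t "-1"] by simp
  show "(c + of_int t - 1/2 - \<beta>)*\<phi> (-1) t - (c + of_int t - \<alpha>)*\<phi> (-1) (t-1) = 0"
    using E[of "-1" t "-1"] by simp
  show "(c + of_int t - 1/2 + 2*\<beta>)*\<phi> (-1) t - (c + of_int t + 2*\<alpha>)*\<phi> (-1) (t+2) = -3/2 * \<phi> 3 t"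
    using E[of "-1" t 2] by (simp add: mult.commute)
  show "(c + of_int t + 1/2 + 2*\<beta>)*\<phi> 1 t - (c + of_int t + 2*\<alpha>)*\<phi> 1 (t+2) = -1/2 * \<phi> 5 t"
    using E[of 1 t 2] by (simp add: mult.commute)
  show "(c + of_int t + 3/2 + \<beta>)*\<phi> 3 t - (c + of_int t + \<alpha>)*\<phi> 3 (t+1) = \<phi> 5 t"
    using E[of 3 t 1] by (simp add: mult.commute)
qed

text \<open>If any coefficient is nonzero, so is some coefficient of Y_(1/2): otherwise the
  relation with q = 1 kills every Y_((1+2m)/2) with m \<noteq> 1, and Y_(-1/2) = 0 kills Y_(3/2).\<close>
lemma L_Y_recursion_first_nonzero:
  assumes R: "L_Y_recursion \<alpha> \<beta> c \<phi>" and nz: "odd q0" "\<phi> q0 t0 \<noteq> 0"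
  shows "\<exists>t. \<phi> 1 t \<noteq> 0"
proof (rule ccontr)
  assume "\<not> ?thesis"
  hence zero1: "\<phi> 1 t = 0" for t by auto
  have zero_neg1: "\<phi> (-1) t = 0" for t using step_down[OF R, of t] zero1 by simp
  show False
  proof (cases "q0 = 3")
    case True
    then show False using step_two_neg[OF R, of t0] zero_neg1 nz by simp
  next
    case False
    obtain m where m: "q0 = 1 + 2*m" using nz(1) by (metis odd_two_times_div_two_succ add.commute)
    with False have "(of_int 1/2 - of_int m/2 :: complex) \<noteq> 0" by auto
    moreover have "(of_int 1/2 - of_int m/2) * \<phi> (1+2*m) t0 = 0"
      using R zero1 unfolding L_Y_recursion_def by (metis odd_one mult_zero_right diff_self)
    ultimately show False using m nz by simp
  qed
qed

lemma quartic_elimination: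
  fixes x \<alpha> \<beta> G0 G1 G2 H0 H1 :: complex
  assumes "(x - 1 + 1/2 + \<beta>)*G1 - (x - 1 + \<alpha>)*G0 = 0"
    "(x - 2 + 1/2 + \<beta>)*G2 - (x - 2 + \<alpha>)*G1 = 0"
    "(x + 1/2 - \<beta>)*G0 - (x - \<alpha>)*G1 = H0"
    "(x - 1 + 1/2 - \<beta>)*G1 - (x - 1 - \<alpha>)*G2 = H1"
    "(x - 1/2 - \<beta>)*H0 - (x - \<alpha>)*H1 = 0"
  shows "G0 * ((\<alpha>-\<beta>-1/2)*(\<alpha>+\<beta>-1/2)*(\<alpha>-\<beta>+1/2)*(\<alpha>+\<beta>-3/2)) = 0"
  using assms by algebra

lemma quartic_constraint:
  assumes R: "L_Y_recursion \<alpha> \<beta> c \<phi>" and t1: "\<phi> 1 t1 \<noteq> 0"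
  shows "(\<alpha>-\<beta>-1/2)*(\<alpha>+\<beta>-1/2)*(\<alpha>-\<beta>+1/2)*(\<alpha>+\<beta>-3/2) = 0"
proof -
  have "\<phi> 1 t1 * ((\<alpha>-\<beta>-1/2)*(\<alpha>+\<beta>-1/2)*(\<alpha>-\<beta>+1/2)*(\<alpha>+\<beta>-3/2)) = 0"
  proof (rule quartic_elimination)
    show "(c + of_int t1 - 1 + 1/2 + \<beta>)*\<phi> 1 (t1-1) - (c + of_int t1 - 1 + \<alpha>)*\<phi> 1 t1 = 0"
      using step_up[OF R, of "t1-1"] by (simp add: algebra_simps)
    show "(c + of_int t1 - 2 + 1/2 + \<beta>)*\<phi> 1 (t1-2) - (c + of_int t1 - 2 + \<alpha>)*\<phi> 1 (t1-1) = 0"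
      using step_up[OF R, of "t1-2"] by (simp add: algebra_simps)
    show "(c + of_int t1 - 1 + 1/2 - \<beta>)*\<phi> 1 (t1-1) - (c + of_int t1 - 1 - \<alpha>)*\<phi> 1 (t1-2)
          = \<phi> (-1) (t1-1)"
      using step_down[OF R, of "t1-1"] by (simp add: algebra_simps)
  qed (use step_down[OF R, of t1] step_down_neg[OF R, of t1] in auto)
  with t1 show ?thesis by simp
qed

text \<open>Either the support of phi 1 contains two adjacent points, or it is a single point t1,
  which forces both coefficients in the step-up relations at t1 and t1 - 1 to vanish.\<close>
lemma adjacent_support_or_isolated:
  assumes R: "L_Y_recursion \<alpha> \<beta> c \<phi>" and t1: "\<phi> 1 t1 \<noteq> 0"
  shows "(\<exists>t. \<phi> 1 t \<noteq> 0 \<and> \<phi> 1 (t+1) \<noteq> 0) \<or> \<beta> = \<alpha> - 3/2"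
proof (cases "\<phi> 1 (t1+1) = 0 \<and> \<phi> 1 (t1-1) = 0")
  case True
  have "c + of_int t1 + 1/2 + \<beta> = 0" using step_up[OF R, of t1] True t1 by simp
  moreover have "c + of_int (t1-1) + \<alpha> = 0" using step_up[OF R, of "t1-1"] True t1 by simp
  ultimately have "\<beta> = \<alpha> - 3/2" by (simp add: algebra_simps) algebra
  then show ?thesis by blast
next
  case False
  then show ?thesis using t1 by (metis diff_add_cancel)
qed

lemma long_window_elimination:
  fixes x \<alpha> \<beta> Gm1 G0 G1 G2 G3 H0 H1 H2 H3 T0 T1 P :: complex
  assumes "(x-1+1/2+\<beta>)*Gm1 - (x-1+\<alpha>)*G0 = 0"
    "(x+1/2+\<beta>)*G0 - (x+\<alpha>)*G1 = 0"
    "(x+1+1/2+\<beta>)*G1 - (x+1+\<alpha>)*G2 = 0"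
    "(x+2+1/2+\<beta>)*G2 - (x+2+\<alpha>)*G3 = 0"
    "(x+1/2-\<beta>)*G0 - (x-\<alpha>)*Gm1 = H0"
    "(x+1+1/2-\<beta>)*G1 - (x+1-\<alpha>)*G0 = H1"
    "(x+2+1/2-\<beta>)*G2 - (x+2-\<alpha>)*G1 = H2"
    "(x+3+1/2-\<beta>)*G3 - (x+3-\<alpha>)*G2 = H3"
    "(x-1/2+2*\<beta>)*H0 - (x+2*\<alpha>)*H2 = -3/2*T0"
    "(x+1-1/2+2*\<beta>)*H1 - (x+1+2*\<alpha>)*H3 = -3/2*T1"
    "(x+1/2+2*\<beta>)*G0 - (x+2*\<alpha>)*G2 = -1/2*P"
    "(x+3/2+\<beta>)*T0 - (x+\<alpha>)*T1 = P"
  shows "\<beta> = 3/2 - \<alpha> \<Longrightarrow> G0 * (\<alpha>*(\<alpha>-1)*(2*\<alpha>-1)*(2*\<alpha>-3)*(x+\<alpha>+2)) = 0"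
    and "\<beta> = 1/2 - \<alpha> \<Longrightarrow> G0 * (\<alpha>*(\<alpha>-1)*(2*\<alpha>-1)*(2*\<alpha>+1)*(x-\<alpha>)) = 0"
  using assms by algebra+

lemma anti_diagonal_window:
  assumes R: "L_Y_recursion \<alpha> \<beta> c \<phi>"
  shows "\<beta> = 3/2 - \<alpha> \<Longrightarrow> \<phi> 1 t * (\<alpha>*(\<alpha>-1)*(2*\<alpha>-1)*(2*\<alpha>-3)*(c + of_int t + \<alpha> + 2)) = 0"
    and "\<beta> = 1/2 - \<alpha> \<Longrightarrow> \<phi> 1 t * (\<alpha>*(\<alpha>-1)*(2*\<alpha>-1)*(2*\<alpha>+1)*(c + of_int t - \<alpha>)) = 0"
proof -
  let ?x = "c + of_int t"
  have i1: "(?x-1+1/2+\<beta>)*\<phi> 1 (t-1) - (?x-1+\<alpha>)*\<phi> 1 t = 0"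
    using step_up[OF R, of "t-1"] by (simp add: algebra_simps)
  have i3: "(?x+1+1/2+\<beta>)*\<phi> 1 (t+1) - (?x+1+\<alpha>)*\<phi> 1 (t+2) = 0"
    using step_up[OF R, of "t+1"] by (simp add: algebra_simps)
  have i4: "(?x+2+1/2+\<beta>)*\<phi> 1 (t+2) - (?x+2+\<alpha>)*\<phi> 1 (t+3) = 0"
    using step_up[OF R, of "t+2"] by (simp add: algebra_simps)
  have i6: "(?x+1+1/2-\<beta>)*\<phi> 1 (t+1) - (?x+1-\<alpha>)*\<phi> 1 t = \<phi> (-1) (t+1)"
    using step_down[OF R, of "t+1"] by (simp add: algebra_simps)
  have i7: "(?x+2+1/2-\<beta>)*\<phi> 1 (t+2) - (?x+2-\<alpha>)*\<phi> 1 (t+1) = \<phi> (-1) (t+2)"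
    using step_down[OF R, of "t+2"] by (simp add: algebra_simps)
  have i8: "(?x+3+1/2-\<beta>)*\<phi> 1 (t+3) - (?x+3-\<alpha>)*\<phi> 1 (t+2) = \<phi> (-1) (t+3)"
    using step_down[OF R, of "t+3"] by (simp add: algebra_simps)
  have i10: "(?x+1-1/2+2*\<beta>)*\<phi> (-1) (t+1) - (?x+1+2*\<alpha>)*\<phi> (-1) (t+3) = -3/2*\<phi> 3 (t+1)"
    using step_two_neg[OF R, of "t+1"] by (simp add: algebra_simps)
  note window = long_window_elimination[OF i1 step_up[OF R, of t] i3 i4 step_down[OF R, of t]
      i6 i7 i8 step_two_neg[OF R, of t] i10 step_two[OF R, of t] step_up_three[OF R, of t]]
  show "\<beta> = 3/2 - \<alpha> \<Longrightarrow> \<phi> 1 t * (\<alpha>*(\<alpha>-1)*(2*\<alpha>-1)*(2*\<alpha>-3)*(c + of_int t + \<alpha> + 2)) = 0"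
    by (rule window(1))
  show "\<beta> = 1/2 - \<alpha> \<Longrightarrow> \<phi> 1 t * (\<alpha>*(\<alpha>-1)*(2*\<alpha>-1)*(2*\<alpha>+1)*(c + of_int t - \<alpha>)) = 0"
    by (rule window(2))
qed

text \<open>At two adjacent points of the support the linear factor in the window identity takes
  two different values, so the remaining quartic in alpha must vanish.\<close>
lemma anti_diagonal_constraint:
  assumes R: "L_Y_recursion \<alpha> \<beta> c \<phi>" and adj: "\<phi> 1 t \<noteq> 0" "\<phi> 1 (t+1) \<noteq> 0"
  shows "\<beta> = 3/2 - \<alpha> \<Longrightarrow> \<alpha>*(\<alpha>-1)*(2*\<alpha>-1)*(2*\<alpha>-3) = 0"
    and "\<beta> = 1/2 - \<alpha> \<Longrightarrow> \<alpha>*(\<alpha>-1)*(2*\<alpha>-1)*(2*\<alpha>+1) = 0"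
proof -
  assume "\<beta> = 3/2 - \<alpha>"
  from anti_diagonal_window(1)[OF R this, of t] anti_diagonal_window(1)[OF R this, of "t+1"] adj
  have "\<alpha>*(\<alpha>-1)*(2*\<alpha>-1)*(2*\<alpha>-3) * (c + of_int t + \<alpha> + 2) = 0"
       "\<alpha>*(\<alpha>-1)*(2*\<alpha>-1)*(2*\<alpha>-3) * (c + of_int t + 1 + \<alpha> + 2) = 0"
    by (simp_all add: add.assoc)
  then show "\<alpha>*(\<alpha>-1)*(2*\<alpha>-1)*(2*\<alpha>-3) = 0" by algebra
next
  assume "\<beta> = 1/2 - \<alpha>"
  from anti_diagonal_window(2)[OF R this, of t] anti_diagonal_window(2)[OF R this, of "t+1"] adj
  have "\<alpha>*(\<alpha>-1)*(2*\<alpha>-1)*(2*\<alpha>+1) * (c + of_int t - \<alpha>) = 0"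
       "\<alpha>*(\<alpha>-1)*(2*\<alpha>-1)*(2*\<alpha>+1) * (c + of_int t + 1 - \<alpha>) = 0"
    by (simp_all add: add.assoc)
  then show "\<alpha>*(\<alpha>-1)*(2*\<alpha>-1)*(2*\<alpha>+1) = 0" by algebra
qed

lemma L_Y_recursion_parameters:
  assumes R: "L_Y_recursion \<alpha> \<beta> c \<phi>" and nz: "odd q0" "\<phi> q0 t0 \<noteq> 0"
  shows "\<beta> = \<alpha> + 1/2 \<or> \<beta> = \<alpha> - 1/2 \<or> (\<alpha>, \<beta>) \<in> {(0, 3/2), (3/2, 0), (1, -1/2), (-1/2, 1)}"
proof -
  obtain t1 where t1: "\<phi> 1 t1 \<noteq> 0" using L_Y_recursion_first_nonzero[OF R nz] by blast
  have "\<beta> = \<alpha> - 1/2 \<or> \<beta> = \<alpha> + 1/2 \<or> \<beta> = 1/2 - \<alpha> \<or> \<beta> = 3/2 - \<alpha>"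
    using quartic_constraint[OF R t1]
    by (simp only: mult_eq_0_iff eq_iff_diff_eq_0[of \<beta>]) (auto simp: algebra_simps)
  then consider "\<beta> = \<alpha> - 1/2" | "\<beta> = \<alpha> + 1/2" | (anti1) "\<beta> = 1/2 - \<alpha>" | (anti3) "\<beta> = 3/2 - \<alpha>"
    by blast
  then show ?thesis
  proof cases
    case anti1
    from adjacent_support_or_isolated[OF R t1] show ?thesis
    proof
      assume "\<exists>t. \<phi> 1 t \<noteq> 0 \<and> \<phi> 1 (t+1) \<noteq> 0"
      then obtain t where "\<phi> 1 t \<noteq> 0" "\<phi> 1 (t+1) \<noteq> 0" by blast
      from anti_diagonal_constraint(2)[OF R this anti1]
      consider "\<alpha> = 0" | "\<alpha> = 1" | "\<alpha> = 1/2" | "\<alpha> = -1/2"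
        by (simp only: mult_eq_0_iff eq_iff_diff_eq_0[of \<alpha>]) (auto simp: field_simps)
      then show ?thesis using anti1 by cases (auto simp: field_simps)
    next
      assume "\<beta> = \<alpha> - 3/2"
      with anti1 have "\<alpha> = 1" by algebra
      then show ?thesis using anti1 by simp
    qed
  next
    case anti3
    from adjacent_support_or_isolated[OF R t1] show ?thesis
    proof
      assume "\<exists>t. \<phi> 1 t \<noteq> 0 \<and> \<phi> 1 (t+1) \<noteq> 0"
      then obtain t where "\<phi> 1 t \<noteq> 0" "\<phi> 1 (t+1) \<noteq> 0" by blast
      from anti_diagonal_constraint(1)[OF R this anti3]
      consider "\<alpha> = 0" | "\<alpha> = 1" | "\<alpha> = 1/2" | "\<alpha> = 3/2"
        by (simp only: mult_eq_0_iff eq_iff_diff_eq_0[of \<alpha>]) (auto simp: algebra_simps)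
      then show ?thesis using anti3 by cases (auto simp: field_simps)
    next
      assume "\<beta> = \<alpha> - 3/2"
      with anti3 have "\<alpha> = 3/2" by algebra
      then show ?thesis using anti3 by simp
    qed
  qed auto
qed

section \<open>From the module structure to the recursion\<close>

definition basis_vec :: "int \<Rightarrow> vec" where
  "basis_vec i = (\<lambda>j. if j = i then 1 else 0)"

lemma basis_vec_Vsp: "basis_vec i \<in> Vsp"
proof -
  have "{j. basis_vec i j \<noteq> 0} = {i}" by (auto simp: basis_vec_def)
  then show ?thesis by (simp add: Vsp_def)
qed

text \<open>[L_m, Y_p] x_k = (p - m/2) Y_(p+m) x_k, read off at the coordinate of x_(k+p+m).\<close>
lemma L_Y_coefficients:
  assumes R: "is_rep (Lop a b b') (Yop f) (Mop g) C" and q: "odd q"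
  shows "(a + of_int (i+q)/2 + (if even (i+q) then b else b')*of_int m) * f q i
       - (a + of_int i/2 + (if even i then b else b')*of_int m) * f q (i+2*m)
       = (of_int q/2 - of_int m/2) * f (q+2*m) i"
proof -
  have "comm (Lop a b b' m) (Yop f q) (basis_vec i)
        = smul (of_int q / 2 - of_int m / 2) (Yop f (q + 2*m) (basis_vec i))"
    using R q basis_vec_Vsp[of i] unfolding is_rep_def by blast
  then have "comm (Lop a b b' m) (Yop f q) (basis_vec i) (i+q+2*m)
      = smul (of_int q / 2 - of_int m / 2) (Yop f (q + 2*m) (basis_vec i)) (i+q+2*m)"
    by simp
  then show ?thesis
    by (simp add: comm_def vsub_def smul_def Lop_def Yop_def basis_vec_def algebra_simps)
qed

text \<open>On the integral basis vectors L has parameter b, and Y maps them to half-integral ones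
  (parameter b').\<close>
lemma L_Y_recursion_integral:
  assumes R: "is_rep (Lop a b b') (Yop f) (Mop g) C"
  shows "L_Y_recursion b b' a (\<lambda>q t. f q (2*t))"
  unfolding L_Y_recursion_def
proof (intro allI impI)
  fix q m t :: int assume q: "odd q"
  then have "\<not> even (2*t+q)" by simp
  then show "(a + of_int t + of_int q/2 + b'*of_int m) * f q (2*t)
      - (a + of_int t + b*of_int m) * f q (2*(t+m)) = (of_int q/2 - of_int m/2) * f (q+2*m) (2*t)"
    using L_Y_coefficients[OF R q, of "2*t" m] by (simp add: algebra_simps add_divide_distrib)
qed

text \<open>The same on the half-integral basis vectors, with the roles of b and b' exchanged.\<close>
lemma L_Y_recursion_half_integral:
  assumes R: "is_rep (Lop a b b') (Yop f) (Mop g) C"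
  shows "L_Y_recursion b' b (a + 1/2) (\<lambda>q t. f q (2*t+1))"
  unfolding L_Y_recursion_def
proof (intro allI impI)
  fix q m t :: int assume q: "odd q"
  then have "even (2*t+1+q)" by simp
  then show "(a + 1/2 + of_int t + of_int q/2 + b*of_int m) * f q (2*t+1)
      - (a + 1/2 + of_int t + b'*of_int m) * f q (2*(t+m)+1)
      = (of_int q/2 - of_int m/2) * f (q+2*m) (2*t+1)"
    using L_Y_coefficients[OF R q, of "2*t+1" m] by (simp add: algebra_simps add_divide_distrib)
qed

text \<open>If S acts nontrivially, some coefficient f_(p,k) is nonzero: if Y acted as zero, then
  every M_n = [Y_p, Y_p'] / (p' - p) (choose p \<noteq> p' with p + p' = n) would act as zero too.\<close>
lemma Y_coefficient_nonzero:
  assumes R: "is_rep L (Yop f) (Mop g) C"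
    and S: "(\<exists>q. odd q \<and> (\<exists>v\<in>Vsp. Yop f q v \<noteq> vzero)) \<or> (\<exists>n. \<exists>v\<in>Vsp. Mop g n v \<noteq> vzero)"
  shows "\<exists>q i. odd q \<and> f q i \<noteq> 0"
proof (rule ccontr)
  assume "\<not> ?thesis"
  then have Y0: "odd q \<Longrightarrow> Yop f q v = vzero" for q v
    by (auto simp: Yop_def vzero_def)
  with S obtain n v where "Mop g n v \<noteq> vzero" by blast
  then obtain i where gn: "g n i \<noteq> 0"
    by (auto simp: Mop_def vzero_def fun_eq_iff)
  obtain q q' where qq: "odd q" "odd q'" "q \<noteq> q'" "(q + q') div 2 = n"
  proof (cases "n = 1")
    case True
    show ?thesis by (rule that[of "-1" 3]) (auto simp: True)
  next
    case False
    show ?thesis by (rule that[of 1 "2*n-1"]) (use False in auto)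
  qed
  have "comm (Yop f q) (Yop f q') (basis_vec i)
        = smul ((of_int q' - of_int q) / 2) (Mop g ((q + q') div 2) (basis_vec i))"
    using R qq basis_vec_Vsp[of i] unfolding is_rep_def by blast
  then have "comm (Yop f q) (Yop f q') (basis_vec i) (i + 2*n)
             = smul ((of_int q' - of_int q) / 2) (Mop g n (basis_vec i)) (i + 2*n)"
    using qq by simp
  then have "(of_int q' - of_int q) / 2 * g n i = (0::complex)"
    using qq by (simp add: comm_def vsub_def smul_def Mop_def basis_vec_def Y0 vzero_def)
  with qq gn show False by simp
qed

theorem lemma3p1:
  fixes a b b' :: complex and f g :: "int \<Rightarrow> int \<Rightarrow> complex"
  assumes "intermediate_series (Lop a b b') (Yop f) (Mop g) (\<lambda>v. vzero)"
    and "(\<exists>q. odd q \<and> (\<exists>v\<in>Vsp. Yop f q v \<noteq> vzero)) \<or> (\<exists>n. \<exists>v\<in>Vsp. Mop g n v \<noteq> vzero)"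
  shows "b' = b + 1/2 \<or> b' = b - 1/2 \<or>
         (b, b') \<in> {(0, 3/2), (3/2, 0), (1, -1/2), (-1/2, 1)}"
proof -
  have R: "is_rep (Lop a b b') (Yop f) (Mop g) (\<lambda>v. vzero)"
    using assms(1) unfolding intermediate_series_def by blast
  obtain q i where qi: "odd q" "f q i \<noteq> 0"
    using Y_coefficient_nonzero[OF R assms(2)] by blast
  show ?thesis
  proof (cases "even i")
    case True
    then obtain t where "i = 2*t" by (metis evenE)
    with qi show ?thesis
      using L_Y_recursion_parameters[OF L_Y_recursion_integral[OF R], of q t] by simp
  next
    case False
    then obtain t where "i = 2*t+1" by (metis oddE)
    with qi have "b = b' + 1/2 \<or> b = b' - 1/2 \<or> (b', b) \<in> {(0,3/2),(3/2,0),(1,-1/2),(-1/2,1)}"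
      using L_Y_recursion_parameters[OF L_Y_recursion_half_integral[OF R], of q t] by simp
    then show ?thesis by auto
  qed
qed

end
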